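(* Let $A,B$ be real symmetric $4\times 4$ matrices defining quadrics $\mathcal A: X^TAX=0$, $\mathcal B: X^TBX=0$ in $\mathbb{PR}^3$ with $f(\lambda)=\det(\lambda A-B)$ not identically zero. If $f(\lambda)=0$ has two real double roots with Segre characteristic $[22]$, then the only possible index sequences (up to equivalence) are $\langle 2\,{\wr\wr}_{-}\,2\,{\wr\wr}_{-}\,2\rangle$ and $\langle 2\,{\wr\wr}_{-}\,2\,{\wr\wr}_{+}\,2\rangle$, and for both sequences the QSIC comprises a real line and a space cubic curve intersecting at two distinct real points.
   Context: $X=(x,y,z,w)^T$ homogeneous coordinates; QSIC $=\mathcal A\cap\mathcal B$. One may choose the basis of the pencil with $A$ nonsingular. Canonical form: for $A$ nonsingular there is a real invertible $Q$ with $Q^TAQ=\mathrm{diag}(\varepsilon_1E_1,\dots,\varepsilon_rE_r,E_{r+1},\dots,E_m)$, $Q^TBQ=\mathrm{diag}(\varepsilon_1E_1J_1,\dots,\varepsilon_rE_rJ_r,E_{r+1}J_{r+1},\dots,E_mJ_m)$, $J_1,\dots,J_r$ the real Jordan blocks of $A^{-1}B$ for real eigenvalues, the others for non-real eigenvalues, $E_i$ anti-identity of matching size, $\varepsilon_i\in\{\pm1\}$ uniquely determined (sign of $J_i$). Segre characteristic $[22]$: two distinct eigenvalues, each with a single $2\times2$ Jordan block. $\mathrm{Id}(\lambda)$ = number of positive eigenvalues of $\lambda A-B$. Index sequence $\langle s_0\sigma_1s_1\cdots\sigma_rs_r\rangle$: $s_j$ are the values of $\mathrm{Id}$ on the intervals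 determined by the distinct real roots $\lambda_1<\dots<\lambda_r$; $\sigma_j$ encodes the Jordan blocks of $\lambda_j$: $|$ for $1\times1$, $p$ copies of $\wr$ with subscript the block's sign for $p\times p$, $p\ge 2$. Equivalence of sequences: induced by change of basis of the pencil (rotation, reversal, and complement $s_j\mapsto4-s_j$ from $(A,B)\mapsto(-A,-B)$, which reverses all sign subscripts). *)

theory Defs
  imports "HOL-Analysis.Analysis" "HOL-Computational_Algebra.Polynomial"
begin

definition sym_mat :: "real^'n^'n \<Rightarrow> bool" where
  "sym_mat A \<longleftrightarrow> transpose A = A"

definition charpoly :: "real^'n^'n \<Rightarrow> real poly" where
  "charpoly M = det (\<chi> i j. (if i = j then [:0, 1:] else 0) - [: M $ i $ j :])"

definition pos_eig_count :: "real^'n^'n \<Rightarrow> nat" where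
  "pos_eig_count M = (\<Sum>a \<in> {a. a > 0 \<and> poly (charpoly M) a = 0}. order a (charpoly M))"

definition Id_pencil :: "real^4^4 \<Rightarrow> real^4^4 \<Rightarrow> real \<Rightarrow> nat" where
  "Id_pencil A B l = pos_eig_count (l *\<^sub>R A - B)"

definition jordan22 :: "real \<Rightarrow> real \<Rightarrow> real^4^4" where
  "jordan22 l1 l2 = vector [vector [l1, 1, 0, 0], vector [0, l1, 0, 0],
                             vector [0, 0, l2, 1], vector [0, 0, 0, l2]]"

definition segre22 :: "real^4^4 \<Rightarrow> real^4^4 \<Rightarrow> real \<Rightarrow> real \<Rightarrow> bool" where
  "segre22 A B l1 l2 \<longleftrightarrow> invertible A \<and> l1 \<noteq> l2 \<and>
     (\<exists>P::real^4^4. invertible P \<and> matrix_inv P ** (matrix_inv A ** B) ** P = jordan22 l1 l2)"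

text \<open>Canonical form diag(e1 E, e2 E), diag(e1 E J_2(l1), e2 E J_2(l2)), E the 2x2 anti-identity.\<close>
definition canonA22 :: "real \<Rightarrow> real \<Rightarrow> real^4^4" where
  "canonA22 e1 e2 = vector [vector [0, e1, 0, 0], vector [e1, 0, 0, 0],
                            vector [0, 0, 0, e2], vector [0, 0, e2, 0]]"

definition canonB22 :: "real \<Rightarrow> real \<Rightarrow> real \<Rightarrow> real \<Rightarrow> real^4^4" where
  "canonB22 e1 e2 l1 l2 = vector [vector [0, e1 * l1, 0, 0], vector [e1 * l1, e1, 0, 0],
                                  vector [0, 0, 0, e2 * l2], vector [0, 0, e2 * l2, e2]]"

definition block_signs22 :: "real^4^4 \<Rightarrow> real^4^4 \<Rightarrow> real \<Rightarrow> real \<Rightarrow> real \<Rightarrow> real \<Rightarrow> bool" where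
  "block_signs22 A B l1 l2 e1 e2 \<longleftrightarrow> e1 \<in> {-1, 1} \<and> e2 \<in> {-1, 1} \<and>
     (\<exists>Q::real^4^4. invertible Q \<and> transpose Q ** A ** Q = canonA22 e1 e2
                   \<and> transpose Q ** B ** Q = canonB22 e1 e2 l1 l2)"

section \<open>Index sequences <s0 (wr wr)_e1 s1 (wr wr)_e2 s2> and their equivalence\<close>

type_synonym iseq22 = "nat \<times> real \<times> nat \<times> real \<times> nat"

text \<open>Index sequence for roots l1 < l2; s_j = value of Id on the j-th interval
  (sampled at a point of the interval; Id is constant on each interval).\<close>
definition index_seq22 :: "real^4^4 \<Rightarrow> real^4^4 \<Rightarrow> real \<Rightarrow> real \<Rightarrow> real \<Rightarrow> real \<Rightarrow> iseq22" where
  "index_seq22 A B l1 l2 e1 e2 =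
     (Id_pencil A B (l1 - 1), e1, Id_pencil A B ((l1 + l2) / 2), e2, Id_pencil A B (l2 + 1))"

fun seq_rot :: "iseq22 \<Rightarrow> iseq22" where
  "seq_rot (s0, e1, s1, e2, s2) = (s1, e2, s2, e1, s1)"

fun seq_rev :: "iseq22 \<Rightarrow> iseq22" where
  "seq_rev (s0, e1, s1, e2, s2) = (s2, e2, s1, e1, s0)"

fun seq_compl :: "iseq22 \<Rightarrow> iseq22" where
  "seq_compl (s0, e1, s1, e2, s2) = (4 - s0, - e1, 4 - s1, - e2, 4 - s2)"

definition seq_step :: "iseq22 \<Rightarrow> iseq22 \<Rightarrow> bool" where
  "seq_step x y \<longleftrightarrow> y = seq_rot x \<or> y = seq_rev x \<or> y = seq_compl x"

definition seq_equiv :: "iseq22 \<Rightarrow> iseq22 \<Rightarrow> bool" where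
  "seq_equiv = equivclp seq_step"

section \<open>The QSIC and its components (complex points, as cones in C^4 minus 0)\<close>

definition cmat :: "real^4^4 \<Rightarrow> complex^4^4" where
  "cmat M = (\<chi> i j. complex_of_real (M $ i $ j))"

definition cvec :: "real^4 \<Rightarrow> complex^4" where
  "cvec v = (\<chi> i. complex_of_real (v $ i))"

definition qform :: "real^4^4 \<Rightarrow> complex^4 \<Rightarrow> complex" where
  "qform A X = (\<Sum>i\<in>UNIV. \<Sum>j\<in>UNIV. X $ i * complex_of_real (A $ i $ j) * X $ j)"

definition qsic :: "real^4^4 \<Rightarrow> real^4^4 \<Rightarrow> (complex^4) set" where
  "qsic A B = {X. X \<noteq> 0 \<and> qform A X = 0 \<and> qform B X = 0}"

definition real_line :: "real^4 \<Rightarrow> real^4 \<Rightarrow> (complex^4) set" where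
  "real_line u v = {X. X \<noteq> 0 \<and> (\<exists>a b. X = a *s cvec u + b *s cvec v)}"

definition lin_indep2 :: "real^4 \<Rightarrow> real^4 \<Rightarrow> bool" where
  "lin_indep2 u v \<longleftrightarrow> (\<forall>a b::real. a *\<^sub>R u + b *\<^sub>R v = 0 \<longrightarrow> a = 0 \<and> b = 0)"

text \<open>Space cubic (twisted cubic) curve: projective image of the rational normal curve
  [s:t] -> [s^3 : s^2 t : s t^2 : t^3] under a real projective transformation M.\<close>
definition space_cubic :: "real^4^4 \<Rightarrow> (complex^4) set" where
  "space_cubic M = {cmat M *v vector [s^3, s^2 * t, s * t^2, t^3] | s t. (s, t) \<noteq> (0, 0)}"

definition real_point :: "real^4 \<Rightarrow> (complex^4) set" where
  "real_point p = {c *s cvec p | c. c \<noteq> 0}"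

end

theory Submission
  imports Defs
begin

text \<open>
  A real congruence \<open>Q\<close> brings the pencil to the canonical form
  \<open>(diag(e\<^sub>1 E, e\<^sub>2 E), diag(e\<^sub>1 E J\<^sub>2(l\<^sub>1), e\<^sub>2 E J\<^sub>2(l\<^sub>2)))\<close>.
  There \<open>l A - B\<close> splits into two \<open>2 \<times> 2\<close> blocks of determinant \<open>-(l - l\<^sub>i)\<^sup>2 < 0\<close>;
  so for \<open>l \<noteq> l\<^sub>1, l\<^sub>2\<close> it is indefinite with positive determinant, and a \<open>4 \<times> 4\<close>
  symmetric matrix of that kind has exactly two positive eigenvalues. Hence every \<open>s\<^sub>j\<close> is 2, and the
  sign subscripts, up to complementation, leave only the two sequences.
  In canonical coordinates both quadrics contain the line \<open>y\<^sub>2 = y\<^sub>4 = 0\<close>. Away from it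
  the two equations are linear in \<open>y\<^sub>1, y\<^sub>3\<close>, and solving them parametrises a twisted
  cubic, which meets the line in the two real points \<open>[1:0:0:0]\<close> and \<open>[0:0:1:0]\<close>.
\<close>

lemma vector_4_nth [simp]:
  "(vector [a, b, c, d] :: 'a::zero^4) $ 1 = a"
  "(vector [a, b, c, d] :: 'a::zero^4) $ 2 = b"
  "(vector [a, b, c, d] :: 'a::zero^4) $ 3 = c"
  "(vector [a, b, c, d] :: 'a::zero^4) $ 4 = d"
  unfolding vector_def by simp_all

lemma vec4_eq_iff: "(x::'a^4) = y \<longleftrightarrow> x$1 = y$1 \<and> x$2 = y$2 \<and> x$3 = y$3 \<and> x$4 = y$4"
  by (simp add: vec_eq_iff forall_4)

lemma vec4_eq_0_iff: "(x::'a::zero^4) = 0 \<longleftrightarrow> x$1 = 0 \<and> x$2 = 0 \<and> x$3 = 0 \<and> x$4 = 0"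
  by (simp add: vec_eq_iff forall_4)

lemma matrix4_eq_iff: "(M::'a^4^4) = N \<longleftrightarrow> (\<forall>i\<in>{1,2,3,4}. \<forall>j\<in>{1,2,3,4}. M$i$j = N$i$j)"
  by (simp add: vec_eq_iff forall_4)

lemma matrix_matrix_mult_4_nth:
  "((M::'a::semiring_1^4^4) ** N) $ i $ j = M$i$1 * N$1$j + M$i$2 * N$2$j + M$i$3 * N$3$j + M$i$4 * N$4$j"
  by (simp add: matrix_matrix_mult_def sum_4)

lemma matrix_vector_mult_4_nth:
  "((M::'a::semiring_1^4^4) *v x) $ i = M$i$1 * x$1 + M$i$2 * x$2 + M$i$3 * x$3 + M$i$4 * x$4"
  by (simp add: matrix_vector_mult_def sum_4)

lemma inner_vec4: "(x::real^4) \<bullet> y = x$1 * y$1 + x$2 * y$2 + x$3 * y$3 + x$4 * y$4"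
  by (simp add: inner_vec_def sum_4)

lemma det_4:
  "det (A::'a::comm_ring_1^4^4) =
 A$1$1*A$2$2*A$3$3*A$4$4 - A$1$1*A$2$2*A$3$4*A$4$3 - A$1$1*A$2$3*A$3$2*A$4$4 + A$1$1*A$2$3*A$3$4*A$4$2
 + A$1$1*A$2$4*A$3$2*A$4$3 - A$1$1*A$2$4*A$3$3*A$4$2 - A$1$2*A$2$1*A$3$3*A$4$4 + A$1$2*A$2$1*A$3$4*A$4$3
 + A$1$2*A$2$3*A$3$1*A$4$4 - A$1$2*A$2$3*A$3$4*A$4$1 - A$1$2*A$2$4*A$3$1*A$4$3 + A$1$2*A$2$4*A$3$3*A$4$1
 + A$1$3*A$2$1*A$3$2*A$4$4 - A$1$3*A$2$1*A$3$4*A$4$2 - A$1$3*A$2$2*A$3$1*A$4$4 + A$1$3*A$2$2*A$3$4*A$4$1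
 + A$1$3*A$2$4*A$3$1*A$4$2 - A$1$3*A$2$4*A$3$2*A$4$1 - A$1$4*A$2$1*A$3$2*A$4$3 + A$1$4*A$2$1*A$3$3*A$4$2
 + A$1$4*A$2$2*A$3$1*A$4$3 - A$1$4*A$2$2*A$3$3*A$4$1 - A$1$4*A$2$3*A$3$1*A$4$2 + A$1$4*A$2$3*A$3$2*A$4$1"
proof -
  have sign_swap_compose: "sign (Transposition.transpose a b \<circ> p) = (if a = b then sign p else - sign p)"
    if "permutation p" for a b and p :: "4 \<Rightarrow> 4"
    using that by (simp add: sign_compose permutation_swap_id sign_swap_id)
  have "finite {2::4, 3, 4}" "1 \<notin> {2::4, 3, 4}" "finite {3::4, 4}" "2 \<notin> {3::4, 4}"
    "finite {4::4}" "3 \<notin> {4::4}" by auto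
  note insert_perms = sum_over_permutations_insert[OF this(1,2)] sum_over_permutations_insert[OF this(3,4)]
    sum_over_permutations_insert[OF this(5,6)]
  show ?thesis
    unfolding det_def UNIV_4 insert_perms permutes_sing
    by (simp add: sign_swap_compose sign_swap_id permutation_swap_id permutation_compose sign_id
        swap_id_eq algebra_simps)
qed

lemma matrix_diff_ldistrib: "(A::'a::ring_1^'n^'m) ** (B - C) = A ** B - A ** C"
  by (simp add: matrix_matrix_mult_def vec_eq_iff algebra_simps sum_subtractf)

lemma matrix_diff_rdistrib: "((A::'a::ring_1^'n^'m) - B) ** C = A ** C - B ** C"
  by (simp add: matrix_matrix_mult_def vec_eq_iff algebra_simps sum_subtractf)

lemma matrix_mul_mat: "(A::real^'n^'m) ** mat t = t *\<^sub>R A"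
  by (simp add: matrix_matrix_mult_def vec_eq_iff mat_def if_distrib mult.commute cong: if_cong)

lemma invertible_matrix_inv:
  assumes "invertible (A::'a::semiring_1^'n^'n)"
  shows "A ** matrix_inv A = mat 1" and "matrix_inv A ** A = mat 1"
  using someI_ex[OF assms[unfolded invertible_def]] by (simp_all add: matrix_inv_def)

lemma inner_matrix_vector_transpose: "((Q::real^'n^'m) *v x) \<bullet> y = x \<bullet> (transpose Q *v y)"
  by (metis dot_lmul_matrix vector_transpose_matrix)

lemma symmetric_matrix_nth:
  assumes "transpose M = M" shows "M $ i $ j = M $ j $ i"
  using arg_cong[OF assms, of "\<lambda>N. N $ j $ i"] by (simp add: transpose_def)

lemma symmetric_matrix_inner_commute:
  fixes S :: "real^'n^'n"
  assumes "transpose S = S" shows "(S *v x) \<bullet> y = x \<bullet> (S *v y)"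
  using inner_matrix_vector_transpose[of S x y] assms by simp

lemma quadratic_form_congruence:
  fixes Q S :: "real^'n^'n"
  shows "(Q *v y) \<bullet> (S *v (Q *v y)) = y \<bullet> ((transpose Q ** S ** Q) *v y)"
  by (simp only: inner_matrix_vector_transpose matrix_vector_mul_assoc matrix_mul_assoc)

section \<open>Spectral theorem and inertia of real symmetric matrices\<close>

lemma linear_plus_quadratic_nonpos_imp_zero:
  fixes a b :: real
  assumes "\<And>t. a * t + b * t^2 \<le> 0"
  shows "a = 0"
proof (rule ccontr)
  assume "a \<noteq> 0"
  define c where "c = \<bar>b\<bar> + 1"
  define t where "t = a / (2 * c)"
  have "c > 0" by (simp add: c_def)
  have "b * t^2 \<ge> - c * t^2"
    by (rule mult_right_mono) (auto simp: c_def)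
  moreover have "a * t - c * t^2 = a^2 / (4 * c)"
    using \<open>c > 0\<close> by (simp add: t_def field_simps power2_eq_square)
  moreover have "a^2 / (4 * c) > 0" using \<open>a \<noteq> 0\<close> \<open>c > 0\<close> by simp
  ultimately show False using assms[of t] by linarith
qed

lemma quadratic_form_max_imp_eigenvector:
  fixes S :: "real^'n^'n"
  assumes sym: "transpose S = S" and sub: "subspace V" and inv: "\<And>x. x \<in> V \<Longrightarrow> S *v x \<in> V"
    and v: "v \<in> V" "v \<bullet> v = 1"
    and max: "\<And>y. y \<in> V \<Longrightarrow> y \<bullet> (S *v y) \<le> (v \<bullet> (S *v v)) * (y \<bullet> y)"
  shows "S *v v = (v \<bullet> (S *v v)) *\<^sub>R v"
proof -
  define M where "M = v \<bullet> (S *v v)"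
  define u where "u = S *v v - M *\<^sub>R v"
  have "u \<in> V" using inv v sub by (simp add: u_def subspace_diff subspace_scale)
  have uv: "u \<bullet> v = 0"
    unfolding u_def M_def inner_diff_left inner_scaleR_left using v(2) by (simp add: inner_commute)
  have Svu: "v \<bullet> (S *v u) = u \<bullet> (S *v v)"
    using symmetric_matrix_inner_commute[OF sym, of v u] by (simp add: inner_commute)
  \<comment> \<open>As \<open>u \<bottom> v\<close>, the bound at \<open>v + t u\<close> is a quadratic inequality in \<open>t\<close> with
    linear coefficient \<open>2 (u \<bullet> S v) = 2 (u \<bullet> u)\<close>.\<close>
  have "2 * (u \<bullet> (S *v v)) * t + (u \<bullet> (S *v u) - M * (u \<bullet> u)) * t^2 \<le> 0" for t
  proof -
    have "v + t *\<^sub>R u \<in> V" using v \<open>u \<in> V\<close> sub by (simp add: subspace_add subspace_scale)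
    from max[OF this] show ?thesis
      using v(2) uv
      by (simp add: M_def[symmetric] Svu matrix_vector_right_distrib matrix_vector_mult_scaleR
          inner_add_left inner_add_right inner_commute power2_eq_square algebra_simps)
  qed
  then have "u \<bullet> (S *v v) = 0"
    using linear_plus_quadratic_nonpos_imp_zero by fastforce
  then have "u \<bullet> u = 0" using uv by (simp add: u_def inner_diff_right inner_commute)
  then show ?thesis by (simp add: u_def M_def)
qed

lemma symmetric_matrix_eigenvector_in_subspace:
  fixes S :: "real^'n^'n"
  assumes sym: "transpose S = S" and sub: "subspace V" and inv: "\<And>x. x \<in> V \<Longrightarrow> S *v x \<in> V"
    and "V \<noteq> {0}"
  obtains v \<mu> where "v \<in> V" "norm v = 1" "S *v v = \<mu> *\<^sub>R v"
proof -
  let ?K = "V \<inter> sphere 0 1" and ?f = "\<lambda>x. x \<bullet> (S *v x)"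
  obtain x where "x \<in> V" "x \<noteq> 0" using \<open>V \<noteq> {0}\<close> subspace_0[OF sub] by blast
  then have "(1 / norm x) *\<^sub>R x \<in> ?K" using sub by (simp add: subspace_scale)
  moreover have "compact ?K" by (intro closed_Int_compact closed_subspace sub compact_sphere)
  moreover have "continuous_on ?K ?f"
    by (intro continuous_intros linear_continuous_on matrix_vector_mul_bounded_linear)
  ultimately obtain v where v: "v \<in> ?K" and vmax: "\<And>y. y \<in> ?K \<Longrightarrow> ?f y \<le> ?f v"
    using continuous_attains_sup[of ?K ?f] by blast
  have vv: "v \<bullet> v = 1" using v by (simp add: norm_eq_1[symmetric])
  have "?f y \<le> ?f v * (y \<bullet> y)" if "y \<in> V" for y
  proof (cases "y = 0")
    case False
    then have "?f ((1 / norm y) *\<^sub>R y) \<le> ?f v"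
      using that sub by (intro vmax) (simp add: subspace_scale)
    then have "?f y / (norm y)^2 \<le> ?f v"
      by (simp add: matrix_vector_mult_scaleR power2_eq_square)
    then show ?thesis
      using False by (simp add: divide_le_eq power2_norm_eq_inner)
  qed simp
  then have "S *v v = ?f v *\<^sub>R v"
    using v vv by (intro quadratic_form_max_imp_eigenvector[OF sym sub inv]) auto
  then show ?thesis using that v by auto
qed

lemma symmetric_matrix_orthogonal_complement_invariant:
  fixes S :: "real^'n^'n"
  assumes "transpose S = S" and "S *v v = \<mu> *\<^sub>R v" and "x \<in> V" and "v \<bullet> x = 0"
    and "\<And>x. x \<in> V \<Longrightarrow> S *v x \<in> V"
  shows "S *v x \<in> {x \<in> V. v \<bullet> x = 0}"
proof -
  have "v \<bullet> (S *v x) = (S *v v) \<bullet> x" using symmetric_matrix_inner_commute[OF assms(1)] by simp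
  then show ?thesis using assms by simp
qed

lemma span_insert_orthogonal_complement:
  assumes "subspace V" and "v \<in> V" and "v \<bullet> v = 1" and "span B = {x \<in> V. v \<bullet> x = 0}"
  shows "span (insert v B) = V"
proof
  show "span (insert v B) \<subseteq> V"
    using assms span_minimal[of "insert v B" V] span_superset[of B] by auto
  show "V \<subseteq> span (insert v B)"
  proof
    fix x assume "x \<in> V"
    then have "x - (v \<bullet> x) *\<^sub>R v \<in> span B"
      using assms by (simp add: subspace_diff subspace_scale inner_diff_right)
    then have "x - (v \<bullet> x) *\<^sub>R v \<in> span (insert v B)" using span_mono[of B] by blast
    moreover have "(v \<bullet> x) *\<^sub>R v \<in> span (insert v B)" by (simp add: span_base span_scale)
    ultimately show "x \<in> span (insert v B)" using span_add by fastforce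
  qed
qed

lemma symmetric_matrix_orthonormal_eigenbasis:
  fixes S :: "real^'n^'n"
  assumes sym: "transpose S = S" and "subspace V" and "\<And>x. x \<in> V \<Longrightarrow> S *v x \<in> V"
  shows "\<exists>B. B \<subseteq> V \<and> pairwise orthogonal B \<and> (\<forall>b\<in>B. norm b = 1 \<and> (\<exists>\<mu>. S *v b = \<mu> *\<^sub>R b))
           \<and> span B = V"
  using assms(2,3)
proof (induction "dim V" arbitrary: V rule: less_induct)
  case less
  show ?case
  proof (cases "V = {0}")
    case True
    then show ?thesis by (intro exI[of _ "{}"]) auto
  next
    case False
    obtain v \<mu> where v: "v \<in> V" "norm v = 1" "S *v v = \<mu> *\<^sub>R v"
      using symmetric_matrix_eigenvector_in_subspace[OF sym less.prems False] by blast
    have vv: "v \<bullet> v = 1" using v by (simp add: norm_eq_1)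
    define W where "W = {x \<in> V. v \<bullet> x = 0}"
    have "subspace W"
      using less.prems(1) unfolding W_def subspace_def by (auto simp: inner_add_right)
    moreover have "\<And>x. x \<in> W \<Longrightarrow> S *v x \<in> W"
      unfolding W_def using symmetric_matrix_orthogonal_complement_invariant[OF sym v(3)] less.prems(2)
      by blast
    moreover have "dim W < dim V"
    proof (rule dim_psubset)
      have "W \<subset> V" using vv v(1) unfolding W_def by force
      then show "span W \<subset> span V"
        using \<open>subspace W\<close> less.prems(1) by (metis span_eq_iff)
    qed
    ultimately obtain B where B: "B \<subseteq> W" "pairwise orthogonal B"
        "\<forall>b\<in>B. norm b = 1 \<and> (\<exists>\<mu>. S *v b = \<mu> *\<^sub>R b)" "span B = W"
      using less.hyps by blast
    have "pairwise orthogonal (insert v B)"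
      using B(1,2) unfolding pairwise_insert by (auto simp: W_def orthogonal_def inner_commute)
    moreover have "span (insert v B) = V"
      using span_insert_orthogonal_complement[OF less.prems(1) v(1) vv] B(4) by (simp add: W_def)
    ultimately show ?thesis
      using B v less.prems(1) by (intro exI[of _ "insert v B"]) (auto simp: W_def)
  qed
qed

definition diag_mat :: "('n::finite \<Rightarrow> real) \<Rightarrow> real^'n^'n" where
  "diag_mat \<mu> = (\<chi> i j. if i = j then \<mu> i else 0)"

lemma diag_mat_mult_nth: "(diag_mat \<mu> *v y) $ i = \<mu> i * y $ i"
  by (simp add: matrix_vector_mult_def diag_mat_def if_distrib if_distribR cong: if_cong)

lemma symmetric_matrix_orthogonal_diagonalization:
  fixes S :: "real^'n^'n"
  assumes sym: "transpose S = S"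
  obtains U \<mu> where "orthogonal_matrix U" and "transpose U ** S ** U = diag_mat \<mu>"
proof -
  obtain B where B: "pairwise orthogonal B" "\<forall>b\<in>B. norm b = 1 \<and> (\<exists>\<mu>. S *v b = \<mu> *\<^sub>R b)"
    "span B = UNIV"
    using symmetric_matrix_orthonormal_eigenbasis[OF sym, of UNIV] by auto
  have "independent B" using B(1,2) by (intro pairwise_orthogonal_independent) auto
  then have "finite B" and "card B = CARD('n)"
    using B(3) dim_eq_card_independent[of B] dim_span[of B] by (auto simp: finiteI_independent)
  then obtain g where g: "bij_betw g (UNIV::'n set) B"
    using finite_same_card_bij[OF finite_class.finite_UNIV, of B] by auto
  define \<mu> where "\<mu> i = (SOME m. S *v g i = m *\<^sub>R g i)" for i
  have ev: "S *v g i = \<mu> i *\<^sub>R g i" for i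
    unfolding \<mu>_def by (rule someI_ex) (use B(2) g in \<open>auto simp: bij_betw_def\<close>)
  define U :: "real^'n^'n" where "U = (\<chi> j i. g i $ j)"
  have column_U: "column i U = g i" for i by (simp add: U_def column_def vec_eq_iff)
  have U: "orthogonal_matrix U"
    unfolding orthogonal_matrix_orthonormal_columns column_U
  proof (intro conjI allI impI)
    fix i j :: 'n
    show "norm (g i) = 1" using B(2) g by (auto simp: bij_betw_def)
    assume "i \<noteq> j"
    then have "g i \<noteq> g j" using g by (auto simp: bij_betw_def inj_on_def)
    then show "orthogonal (g i) (g j)" using B(1) g unfolding pairwise_def bij_betw_def by blast
  qed
  have "S ** U = U ** diag_mat \<mu>"
  proof -
    have "(S ** U) $ j $ i = (U ** diag_mat \<mu>) $ j $ i" for i j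
    proof -
      have "(S ** U) $ j $ i = (S *v g i) $ j"
        by (simp add: matrix_matrix_mult_def matrix_vector_mult_def U_def)
      also have "\<dots> = (U ** diag_mat \<mu>) $ j $ i"
        by (simp add: ev matrix_matrix_mult_def U_def diag_mat_def if_distrib cong: if_cong)
      finally show ?thesis .
    qed
    then show ?thesis by (simp add: vec_eq_iff)
  qed
  then have "transpose U ** S ** U = diag_mat \<mu>"
    using U by (metis orthogonal_matrix_def matrix_mul_assoc matrix_mul_lid)
  with U that show ?thesis by blast
qed

lemma det_orthogonal_congruence:
  fixes U M :: "real^'n^'n"
  assumes "orthogonal_matrix U"
  shows "det (transpose U ** M ** U) = det M"
proof -
  have "det U * det U = 1"
    using assms by (metis det_I det_mul det_transpose orthogonal_matrix_def)
  then show ?thesis by (simp add: det_mul det_transpose algebra_simps)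
qed

lemma poly_charpoly: "poly (charpoly M) t = det (mat t - M)"
proof -
  have "poly ((if b then [:0, 1:] else 0) - [:m:]) t = (if b then t else 0) - m" for b and m :: real
    by (cases b) simp_all
  then show ?thesis
    unfolding charpoly_def det_def by (simp add: poly_sum poly_prod mat_def of_int_poly del: poly_diff)
qed

lemma order_linear_factor: "order a [:- m, 1:] = (if a = (m::'a::idom) then 1 else 0)"
  using order_power_n_n[of m 1] by (auto intro: order_0I)

lemma order_prod_linear_factors:
  fixes \<mu> :: "'i \<Rightarrow> 'a::idom"
  assumes "finite I"
  shows "order a (\<Prod>i\<in>I. [:- \<mu> i, 1:]) = card {i\<in>I. \<mu> i = a}"
  using assms
proof (induction I rule: finite_induct)
  case (insert j I)
  have "(\<Prod>i\<in>I. [:- \<mu> i, 1:]) \<noteq> 0"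
    using insert.hyps(1) by (simp add: prod_zero_iff)
  then have nz: "[:- \<mu> j, 1:] * (\<Prod>i\<in>I. [:- \<mu> i, 1:]) \<noteq> 0"
    by (metis mult_eq_0_iff pCons_eq_0_iff one_neq_zero)
  then have "order a (\<Prod>i\<in>insert j I. [:- \<mu> i, 1:]) = order a [:- \<mu> j, 1:] + card {i\<in>I. \<mu> i = a}"
    by (simp only: prod.insert[OF insert.hyps] order_mult[OF nz] insert.IH)
  also have "{i\<in>insert j I. \<mu> i = a} = (if \<mu> j = a then insert j {i\<in>I. \<mu> i = a} else {i\<in>I. \<mu> i = a})"
    by auto
  then have "order a [:- \<mu> j, 1:] + card {i\<in>I. \<mu> i = a} = card {i\<in>insert j I. \<mu> i = a}"
    using insert.hyps by (simp add: order_linear_factor eq_commute[of a])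
  finally show ?case .
qed simp

context
  fixes S U :: "real^'n^'n" and \<mu> :: "'n \<Rightarrow> real"
  assumes orthogonal_U: "orthogonal_matrix U" and diagonalizes: "transpose U ** S ** U = diag_mat \<mu>"
begin

lemma det_eq_prod_eigenvalues: "det S = (\<Prod>i\<in>UNIV. \<mu> i)"
  using det_orthogonal_congruence[OF orthogonal_U, of S] by (simp add: diagonalizes det_diagonal diag_mat_def)

lemma charpoly_eq_prod_eigenvalues: "charpoly S = (\<Prod>i\<in>UNIV. [:- \<mu> i, 1:])"
proof -
  have "poly (charpoly S) t = poly (\<Prod>i\<in>UNIV. [:- \<mu> i, 1:]) t" for t
  proof -
    have "transpose U ** (mat t - S) ** U = t *\<^sub>R mat 1 - diag_mat \<mu>"
      using orthogonal_U
      by (simp add: matrix_diff_ldistrib matrix_diff_rdistrib matrix_mul_mat diagonalizes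
          orthogonal_matrix_def flip: scalar_matrix_assoc)
    then have "det (mat t - S) = det (t *\<^sub>R mat 1 - diag_mat \<mu>)"
      using det_orthogonal_congruence[OF orthogonal_U] by metis
    also have "\<dots> = (\<Prod>i\<in>UNIV. t - \<mu> i)"
      by (subst det_diagonal) (simp_all add: diag_mat_def mat_def)
    finally show ?thesis by (simp add: poly_charpoly poly_prod)
  qed
  then show ?thesis using poly_eq_poly_eq_iff by blast
qed

lemma pos_eig_count_eq_card_pos_eigenvalues: "pos_eig_count S = card {i. \<mu> i > 0}"
proof -
  have roots: "{a. a > 0 \<and> poly (charpoly S) a = 0} = \<mu> ` {i. \<mu> i > 0}"
    by (auto simp: charpoly_eq_prod_eigenvalues poly_prod prod_zero_iff)
  have "pos_eig_count S = (\<Sum>a\<in>\<mu> ` {i. \<mu> i > 0}. card {i. \<mu> i = a})"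
    unfolding pos_eig_count_def roots by (simp add: charpoly_eq_prod_eigenvalues order_prod_linear_factors)
  also have "\<dots> = (\<Sum>a\<in>\<mu> ` {i. \<mu> i > 0}. card {i\<in>{i. \<mu> i > 0}. \<mu> i = a})"
    by (intro sum.cong refl arg_cong[where f = card]) auto
  also have "\<dots> = card {i. \<mu> i > 0}"
    using sum.image_gen[of "{i. \<mu> i > 0}" "\<lambda>_. 1::nat" \<mu>] by simp
  finally show ?thesis .
qed

lemma quadratic_form_eq_sum_eigenvalues:
  "x \<bullet> (S *v x) = (\<Sum>i\<in>UNIV. \<mu> i * ((transpose U *v x) $ i)^2)"
proof -
  define y where "y = transpose U *v x"
  have "x = U *v y"
    unfolding y_def matrix_vector_mul_assoc using orthogonal_U by (simp add: orthogonal_matrix_def)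
  then have "x \<bullet> (S *v x) = y \<bullet> (diag_mat \<mu> *v y)"
    by (simp add: quadratic_form_congruence diagonalizes)
  also have "\<dots> = (\<Sum>i\<in>UNIV. \<mu> i * (y $ i)^2)"
    by (simp add: inner_vec_def diag_mat_mult_nth power2_eq_square mult_ac)
  finally show ?thesis by (simp add: y_def)
qed

end

lemma pos_eig_count_eq_2:
  fixes S :: "real^4^4"
  assumes sym: "transpose S = S" and "det S > 0"
    and pos: "x \<bullet> (S *v x) > 0" and neg: "y \<bullet> (S *v y) < 0"
  shows "pos_eig_count S = 2"
proof -
  obtain U \<mu> where U: "orthogonal_matrix U" and D: "transpose U ** S ** U = diag_mat \<mu>"
    using symmetric_matrix_orthogonal_diagonalization[OF sym] by blast
  define P where "P = {i. \<mu> i > 0}"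
  define N where "N = {i. \<mu> i < 0}"
  have prod_eigenvalues_pos: "(\<Prod>i\<in>UNIV. \<mu> i) > 0" using \<open>det S > 0\<close> det_eq_prod_eigenvalues[OF U D] by simp
  then have "\<mu> i \<noteq> 0" for i by (metis UNIV_I finite_class.finite_UNIV less_irrefl prod_zero_iff)
  then have PN: "P \<union> N = UNIV" "P \<inter> N = {}" by (auto simp: P_def N_def neq_iff)
  have "P \<noteq> {}"
  proof
    assume "P = {}"
    then have "x \<bullet> (S *v x) \<le> 0" unfolding quadratic_form_eq_sum_eigenvalues[OF U D]
      by (intro sum_nonpos) (auto simp: P_def not_less mult_nonpos_nonneg)
    with pos show False by simp
  qed
  have "N \<noteq> {}"
  proof
    assume "N = {}"
    then have "y \<bullet> (S *v y) \<ge> 0" unfolding quadratic_form_eq_sum_eigenvalues[OF U D]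
      by (intro sum_nonneg) (auto simp: N_def not_less)
    with neg show False by simp
  qed
  have "(\<Prod>i\<in>N. \<mu> i) = (\<Prod>i\<in>N. (-1) * (- \<mu> i))" by simp
  also have "\<dots> = (-1) ^ card N * (\<Prod>i\<in>N. - \<mu> i)" by (simp only: prod.distrib prod_constant)
  finally have "(\<Prod>i\<in>UNIV. \<mu> i) = (\<Prod>i\<in>P. \<mu> i) * ((-1) ^ card N * (\<Prod>i\<in>N. - \<mu> i))"
    using prod.union_disjoint[of P N \<mu>] PN by simp
  moreover have "(\<Prod>i\<in>P. \<mu> i) > 0" by (rule prod_pos) (simp add: P_def)
  moreover have "(\<Prod>i\<in>N. - \<mu> i) > 0" by (rule prod_pos) (simp add: N_def)
  ultimately have "((-1::real) ^ card N) > 0"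
    using prod_eigenvalues_pos by (metis zero_less_mult_pos zero_less_mult_pos2)
  then have "even (card N)" by (cases "even (card N)") (simp_all add: neg_one_odd_power)
  moreover have "card P + card N = 4" using card_Un_disjoint[of P N] PN by simp
  moreover have "card P \<noteq> 0" "card N \<noteq> 0" using \<open>P \<noteq> {}\<close> \<open>N \<noteq> {}\<close> by simp_all
  ultimately have "card P = 2" by presburger
  then show ?thesis using pos_eig_count_eq_card_pos_eigenvalues[OF U D] by (simp add: P_def)
qed

section \<open>Canonical form of a pencil with Segre characteristic [22]\<close>

lemma jordan22_nth:
  "jordan22 l1 l2 $ 1 $ 1 = l1" "jordan22 l1 l2 $ 1 $ 2 = 1" "jordan22 l1 l2 $ 1 $ 3 = 0" "jordan22 l1 l2 $ 1 $ 4 = 0"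
  "jordan22 l1 l2 $ 2 $ 1 = 0" "jordan22 l1 l2 $ 2 $ 2 = l1" "jordan22 l1 l2 $ 2 $ 3 = 0" "jordan22 l1 l2 $ 2 $ 4 = 0"
  "jordan22 l1 l2 $ 3 $ 1 = 0" "jordan22 l1 l2 $ 3 $ 2 = 0" "jordan22 l1 l2 $ 3 $ 3 = l2" "jordan22 l1 l2 $ 3 $ 4 = 1"
  "jordan22 l1 l2 $ 4 $ 1 = 0" "jordan22 l1 l2 $ 4 $ 2 = 0" "jordan22 l1 l2 $ 4 $ 3 = 0" "jordan22 l1 l2 $ 4 $ 4 = l2"
  by (simp_all add: jordan22_def)

lemma jordan22_symmetrizer_block_form:
  fixes G :: "real^4^4"
  assumes sym: "transpose G = G" and sym_GJ: "transpose (G ** jordan22 l1 l2) = G ** jordan22 l1 l2"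
    and "l1 \<noteq> l2"
  shows "G = vector [vector [0, G$1$2, 0, 0], vector [G$1$2, G$2$2, 0, 0],
                     vector [0, 0, 0, G$3$4], vector [0, 0, G$3$4, G$4$4]]"
proof -
  note g = symmetric_matrix_nth[OF sym]
  note h = symmetric_matrix_nth[OF sym_GJ, unfolded matrix_matrix_mult_4_nth]
  have "G$1$1 = 0" using h[of 1 2] g[of 2 1] by (simp add: jordan22_nth)
  moreover have g13: "G$1$3 = 0" using h[of 1 3] g[of 3 1] \<open>l1 \<noteq> l2\<close> by (simp add: jordan22_nth)
  moreover have g23: "G$2$3 = 0" using h[of 2 3] g[of 3 1] g[of 3 2] g13 \<open>l1 \<noteq> l2\<close> by (simp add: jordan22_nth)
  moreover have g14: "G$1$4 = 0" using h[of 1 4] g[of 4 1] g13 \<open>l1 \<noteq> l2\<close> by (simp add: jordan22_nth)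
  moreover have "G$2$4 = 0" using h[of 2 4] g[of 4 1] g[of 4 2] g23 g14 \<open>l1 \<noteq> l2\<close> by (simp add: jordan22_nth)
  moreover have "G$3$3 = 0" using h[of 3 4] g[of 4 3] by (simp add: jordan22_nth)
  ultimately show ?thesis
    unfolding matrix4_eq_iff using g[of 2 1] g[of 3 1] g[of 4 1] g[of 3 2] g[of 4 2] g[of 4 3] by simp
qed

lemma segre22_congruent_jordan:
  assumes "segre22 A B l1 l2"
  obtains P where "invertible P"
    and "transpose P ** B ** P = (transpose P ** A ** P) ** jordan22 l1 l2"
proof -
  from assms obtain P where A: "invertible A" and P: "invertible P"
    and PJ: "matrix_inv P ** (matrix_inv A ** B) ** P = jordan22 l1 l2"
    by (auto simp: segre22_def)
  have "A ** P ** jordan22 l1 l2 = A ** (P ** matrix_inv P) ** (matrix_inv A ** B) ** P"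
    unfolding PJ[symmetric] by (simp add: matrix_mul_assoc)
  also have "\<dots> = (A ** matrix_inv A) ** B ** P"
    using invertible_matrix_inv[OF P] by (simp add: matrix_mul_assoc)
  also have "\<dots> = B ** P" by (simp add: invertible_matrix_inv[OF A])
  finally have "transpose P ** B ** P = transpose P ** (A ** P ** jordan22 l1 l2)"
    by (simp add: matrix_mul_assoc)
  then show ?thesis using that P by (simp add: matrix_mul_assoc)
qed

text \<open>Congruence by \<open>[[u, t], [0, u]]\<close> turns the block \<open>[[0, a], [a, b]]\<close> into
  \<open>[[0, e], [e, 0]]\<close>.\<close>
lemma anti_triangular_block_normal_form:
  fixes a b :: real
  assumes "a \<noteq> 0"
  obtains u t e where "u \<noteq> 0" "e \<in> {-1, 1}" "u * u * a = e" "2 * t * u * a + u * u * b = 0"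
proof
  define u where "u = 1 / sqrt \<bar>a\<bar>"
  have "sqrt \<bar>a\<bar> > 0" using assms by simp
  then have uu: "u * u = 1 / \<bar>a\<bar>" by (simp add: u_def field_simps)
  show "u \<noteq> 0" using \<open>sqrt \<bar>a\<bar> > 0\<close> by (simp add: u_def)
  show "sgn a \<in> {-1, 1}" using assms by (simp add: sgn_if)
  show "u * u * a = sgn a" using assms uu by (simp add: sgn_if)
  show "2 * (- u * b / (2 * a)) * u * a + u * u * b = 0" using assms by (simp add: field_simps)
qed

lemma block_symmetrizer_canonical_form:
  fixes a b c d l1 l2 :: real
  assumes "a \<noteq> 0" "c \<noteq> 0"
  defines "G \<equiv> vector [vector [0, a, 0, 0], vector [a, b, 0, 0], vector [0, 0, 0, c], vector [0, 0, c, d]]"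
  obtains R :: "real^4^4" and e1 e2 where "invertible R" "e1 \<in> {-1, 1}" "e2 \<in> {-1, 1}"
    "transpose R ** G ** R = canonA22 e1 e2"
    "transpose R ** (G ** jordan22 l1 l2) ** R = canonB22 e1 e2 l1 l2"
proof -
  obtain u1 t1 e1 where 1: "u1 \<noteq> 0" "e1 \<in> {-1, 1}" "u1 * u1 * a = e1" "2 * t1 * u1 * a + u1 * u1 * b = 0"
    by (rule anti_triangular_block_normal_form[OF \<open>a \<noteq> 0\<close>])
  obtain u2 t2 e2 where 2: "u2 \<noteq> 0" "e2 \<in> {-1, 1}" "u2 * u2 * c = e2" "2 * t2 * u2 * c + u2 * u2 * d = 0"
    by (rule anti_triangular_block_normal_form[OF \<open>c \<noteq> 0\<close>])
  define R :: "real^4^4" where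
    "R = vector [vector [u1, t1, 0, 0], vector [0, u1, 0, 0], vector [0, 0, u2, t2], vector [0, 0, 0, u2]]"
  have "det R \<noteq> 0" using 1(1) 2(1) unfolding R_def det_4 by simp
  then have R: "invertible R" by (simp add: invertible_det_nz)
  have A: "transpose R ** G ** R = canonA22 e1 e2"
    unfolding matrix4_eq_iff G_def R_def
    apply (simp add: matrix_matrix_mult_4_nth transpose_def canonA22_def)
    using 1(3,4) 2(3,4) by (simp add: algebra_simps; linarith)
  have B: "transpose R ** (G ** jordan22 l1 l2) ** R = canonB22 e1 e2 l1 l2"
    unfolding matrix4_eq_iff G_def R_def
    apply (simp add: matrix_matrix_mult_4_nth transpose_def canonB22_def jordan22_nth)
    using 1(3) 2(3) arg_cong[OF 1(4), of "\<lambda>x. l1 * x"] arg_cong[OF 2(4), of "\<lambda>x. l2 * x"]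
    by (simp add: algebra_simps; linarith)
  from R 1(2) 2(2) A B show ?thesis by (rule that)
qed

lemma segre22_block_signs:
  fixes A B :: "real^4^4"
  assumes symA: "transpose A = A" and symB: "transpose B = B" and segre: "segre22 A B l1 l2"
  obtains e1 e2 where "block_signs22 A B l1 l2 e1 e2"
proof -
  obtain P where P: "invertible P" and PJ: "transpose P ** B ** P = (transpose P ** A ** P) ** jordan22 l1 l2"
    by (rule segre22_congruent_jordan[OF segre])
  define G where "G = transpose P ** A ** P"
  have GJ: "transpose P ** B ** P = G ** jordan22 l1 l2" by (simp add: G_def PJ)
  have "transpose G = G" by (simp add: G_def matrix_transpose_mul symA matrix_mul_assoc)
  moreover have "transpose (G ** jordan22 l1 l2) = G ** jordan22 l1 l2"
    unfolding GJ[symmetric] by (simp add: matrix_transpose_mul symB matrix_mul_assoc)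
  moreover have "l1 \<noteq> l2" using segre by (simp add: segre22_def)
  ultimately have G: "G = vector [vector [0, G$1$2, 0, 0], vector [G$1$2, G$2$2, 0, 0],
                     vector [0, 0, 0, G$3$4], vector [0, 0, G$3$4, G$4$4]]"
    by (rule jordan22_symmetrizer_block_form)
  have "det G \<noteq> 0"
    using P segre by (simp add: G_def det_mul det_transpose invertible_det_nz segre22_def)
  then have "G$1$2 \<noteq> 0" "G$3$4 \<noteq> 0"
    by (subst (asm) G, simp add: det_4)+
  obtain R e1 e2 where R: "invertible R" "e1 \<in> {-1, 1}" "e2 \<in> {-1, 1}"
      "transpose R ** G ** R = canonA22 e1 e2"
      "transpose R ** (G ** jordan22 l1 l2) ** R = canonB22 e1 e2 l1 l2"
    by (rule block_symmetrizer_canonical_form[where b = "G$2$2" and d = "G$4$4",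
        OF \<open>G$1$2 \<noteq> 0\<close> \<open>G$3$4 \<noteq> 0\<close>, folded G])
  have "transpose (P ** R) ** A ** (P ** R) = canonA22 e1 e2"
    using R(4) by (simp add: G_def matrix_transpose_mul matrix_mul_assoc)
  moreover have "transpose (P ** R) ** B ** (P ** R) = canonB22 e1 e2 l1 l2"
    using R(5) by (simp add: GJ[symmetric] matrix_transpose_mul matrix_mul_assoc)
  moreover have "invertible (P ** R)" using P R(1) by (rule invertible_mult)
  ultimately have "\<exists>Q. invertible Q \<and> transpose Q ** A ** Q = canonA22 e1 e2
      \<and> transpose Q ** B ** Q = canonB22 e1 e2 l1 l2"
    by blast
  with R(2,3) have "block_signs22 A B l1 l2 e1 e2" by (simp add: block_signs22_def)
  then show ?thesis by (rule that)
qed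

section \<open>Complex points of quadrics under real projective transformations\<close>

lemma cmat_mult: "cmat (M ** N) = cmat M ** cmat N"
  by (simp add: cmat_def matrix_matrix_mult_def vec_eq_iff)

lemma cmat_transpose: "cmat (transpose M) = transpose (cmat M)"
  by (simp add: cmat_def transpose_def vec_eq_iff)

lemma cmat_mat: "cmat (mat 1) = mat 1"
  by (simp add: cmat_def mat_def vec_eq_iff)

lemma cvec_matrix_vector_mult: "cvec (M *v v) = cmat M *v cvec v"
  by (simp add: cvec_def cmat_def matrix_vector_mult_def vec_eq_iff)

lemma invertible_cmat: "invertible M \<Longrightarrow> invertible (cmat M)"
  unfolding invertible_def by (metis cmat_mult cmat_mat)

definition vec_dot :: "'a::comm_semiring_1^'n \<Rightarrow> 'a^'n \<Rightarrow> 'a" where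
  "vec_dot x y = (\<Sum>i\<in>UNIV. x $ i * y $ i)"

lemma qform_eq_vec_dot: "qform M X = vec_dot X (cmat M *v X)"
  by (simp add: qform_def vec_dot_def cmat_def matrix_vector_mult_def sum_distrib_left mult_ac)

lemma vec_dot_matrix_vector_mult: "vec_dot (C *v x) y = vec_dot x (transpose C *v y)"
proof -
  have "vec_dot (C *v x) y = (\<Sum>i\<in>UNIV. \<Sum>k\<in>UNIV. C$i$k * x$k * y$i)"
    by (simp add: vec_dot_def matrix_vector_mult_def sum_distrib_right)
  also have "\<dots> = (\<Sum>k\<in>UNIV. \<Sum>i\<in>UNIV. C$i$k * x$k * y$i)" by (rule sum.swap)
  also have "\<dots> = vec_dot x (transpose C *v y)"
    by (simp add: vec_dot_def matrix_vector_mult_def transpose_def sum_distrib_left mult_ac)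
  finally show ?thesis .
qed

lemma qform_congruence: "qform A (cmat Q *v Y) = qform (transpose Q ** A ** Q) Y"
  unfolding qform_eq_vec_dot vec_dot_matrix_vector_mult
  by (simp add: cmat_mult cmat_transpose matrix_vector_mul_assoc matrix_mul_assoc)

context
  fixes Q :: "real^4^4"
  assumes invertible_Q: "invertible Q"
begin

lemma cmat_mult_eq_iff: "cmat Q *v Y = cmat Q *v Z \<longleftrightarrow> Y = Z"
  using inj_matrix_vector_mult[OF invertible_cmat[OF invertible_Q]] by (auto dest: injD)

lemma cmat_mult_eq_0_iff: "cmat Q *v Y = 0 \<longleftrightarrow> Y = 0"
  using cmat_mult_eq_iff[of Y 0] by simp

lemma eq_cmat_image:
  assumes "\<And>Y. cmat Q *v Y \<in> T \<longleftrightarrow> Y \<in> S"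
  shows "T = (*v) (cmat Q) ` S"
proof -
  have "surj ((*v) (cmat Q))"
    using invertible_cmat[OF invertible_Q] matrix_right_invertible_surjective
    unfolding invertible_def by blast
  moreover have "S = (*v) (cmat Q) -` T" using assms by auto
  ultimately show ?thesis by (simp add: surj_image_vimage_eq)
qed

lemma qsic_congruence: "qsic A B = (*v) (cmat Q) ` qsic (transpose Q ** A ** Q) (transpose Q ** B ** Q)"
  by (rule eq_cmat_image) (simp add: qsic_def cmat_mult_eq_0_iff qform_congruence)

lemma real_line_transform: "real_line (Q *v u) (Q *v v) = (*v) (cmat Q) ` real_line u v"
proof (rule eq_cmat_image)
  fix Y
  have "a *s cvec (Q *v u) + b *s cvec (Q *v v) = cmat Q *v (a *s cvec u + b *s cvec v)" for a b
    by (simp add: cvec_matrix_vector_mult matrix_vector_right_distrib vector_scalar_commute)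
  then show "cmat Q *v Y \<in> real_line (Q *v u) (Q *v v) \<longleftrightarrow> Y \<in> real_line u v"
    unfolding real_line_def by (simp add: cmat_mult_eq_iff cmat_mult_eq_0_iff)
qed

lemma space_cubic_transform: "space_cubic (Q ** M) = (*v) (cmat Q) ` space_cubic M"
  by (rule eq_cmat_image)
    (simp add: space_cubic_def cmat_mult cmat_mult_eq_iff flip: matrix_vector_mul_assoc)

lemma real_point_transform: "real_point (Q *v p) = (*v) (cmat Q) ` real_point p"
  by (rule eq_cmat_image)
    (simp add: real_point_def cvec_matrix_vector_mult cmat_mult_eq_iff flip: vector_scalar_commute)

end

section \<open>The intersection curve of the canonical pencil\<close>

definition canon_u :: "real^4" where "canon_u = vector [1, 0, 0, 0]"
definition canon_v :: "real^4" where "canon_v = vector [0, 0, 1, 0]"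

text \<open>Off the line \<open>y\<^sub>2 = y\<^sub>4 = 0\<close> the two canonical quadrics are linear in \<open>y\<^sub>1, y\<^sub>3\<close>;
  solving for them by Cramer's rule with \<open>y\<^sub>2 = s, y\<^sub>4 = t\<close> and clearing the denominator
  \<open>2 e\<^sub>1 e\<^sub>2 (l\<^sub>2 - l\<^sub>1) s t\<close> gives this parametrisation of the residual cubic.\<close>
definition canon_cubic :: "real \<Rightarrow> real \<Rightarrow> real \<Rightarrow> real \<Rightarrow> real^4^4" where
  "canon_cubic e1 e2 l1 l2 =
     vector [vector [0, e1 * e2, 0, 1], vector [0, 2 * (l2 - l1) * (e1 * e2), 0, 0],
             vector [-1, 0, - (e1 * e2), 0], vector [0, 0, 2 * (l2 - l1) * (e1 * e2), 0]]"

lemma qform_canonA22: "qform (canonA22 e1 e2) Y = 2 * of_real e1 * Y$1 * Y$2 + 2 * of_real e2 * Y$3 * Y$4"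
  by (simp add: qform_def sum_4 canonA22_def algebra_simps)

lemma qform_canonB22:
  "qform (canonB22 e1 e2 l1 l2) Y =
     2 * of_real e1 * of_real l1 * Y$1 * Y$2 + of_real e1 * Y$2^2
     + 2 * of_real e2 * of_real l2 * Y$3 * Y$4 + of_real e2 * Y$4^2"
  by (simp add: qform_def sum_4 canonB22_def algebra_simps power2_eq_square)

lemma mem_real_line_canon: "Y \<in> real_line canon_u canon_v \<longleftrightarrow> Y \<noteq> 0 \<and> Y$2 = 0 \<and> Y$4 = 0"
proof -
  have "Y = Y$1 *s cvec canon_u + Y$3 *s cvec canon_v" if "Y$2 = 0" "Y$4 = 0"
    using that by (simp add: canon_u_def canon_v_def cvec_def vec4_eq_iff)
  then show ?thesis
    unfolding real_line_def by (auto simp: canon_u_def canon_v_def cvec_def)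
qed

lemma mem_real_point_canon_u: "Y \<in> real_point canon_u \<longleftrightarrow> Y$1 \<noteq> 0 \<and> Y$2 = 0 \<and> Y$3 = 0 \<and> Y$4 = 0"
proof -
  have "Y = Y$1 *s cvec canon_u" if "Y$2 = 0" "Y$3 = 0" "Y$4 = 0"
    using that by (simp add: canon_u_def cvec_def vec4_eq_iff)
  then show ?thesis
    unfolding real_point_def by (auto simp: canon_u_def cvec_def)
qed

lemma mem_real_point_canon_v: "Y \<in> real_point canon_v \<longleftrightarrow> Y$3 \<noteq> 0 \<and> Y$1 = 0 \<and> Y$2 = 0 \<and> Y$4 = 0"
proof -
  have "Y = Y$3 *s cvec canon_v" if "Y$1 = 0" "Y$2 = 0" "Y$4 = 0"
    using that by (simp add: canon_v_def cvec_def vec4_eq_iff)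
  then show ?thesis
    unfolding real_point_def by (auto simp: canon_v_def cvec_def)
qed

definition cubic_param :: "complex \<Rightarrow> complex \<Rightarrow> complex^4" where
  "cubic_param s t = vector [s^3, s^2 * t, s * t^2, t^3]"

lemma mem_space_cubic: "Y \<in> space_cubic M \<longleftrightarrow> (\<exists>s t. (s, t) \<noteq> (0, 0) \<and> Y = cmat M *v cubic_param s t)"
  by (auto simp: space_cubic_def cubic_param_def)

lemma cubic_param_scale: "cubic_param (c * s) (c * t) = c^3 *s cubic_param s t"
  by (simp add: cubic_param_def vec4_eq_iff power2_eq_square power3_eq_cube)

lemma canon_cubic_param_nth:
  fixes e1 e2 l1 l2 :: real and s t :: complex
  shows "(cmat (canon_cubic e1 e2 l1 l2) *v cubic_param s t) $ 1 = of_real e1 * of_real e2 * s^2 * t + t^3"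
    and "(cmat (canon_cubic e1 e2 l1 l2) *v cubic_param s t) $ 2
           = 2 * (of_real l2 - of_real l1) * of_real e1 * of_real e2 * s^2 * t"
    and "(cmat (canon_cubic e1 e2 l1 l2) *v cubic_param s t) $ 3 = - (s^3) - of_real e1 * of_real e2 * s * t^2"
    and "(cmat (canon_cubic e1 e2 l1 l2) *v cubic_param s t) $ 4
           = 2 * (of_real l2 - of_real l1) * of_real e1 * of_real e2 * s * t^2"
  by (simp_all add: cmat_def canon_cubic_def cubic_param_def matrix_vector_mult_4_nth algebra_simps)

lemma mem_canon_qsic:
  "Y \<in> qsic (canonA22 e1 e2) (canonB22 e1 e2 l1 l2) \<longleftrightarrow> Y \<noteq> 0
     \<and> 2 * of_real e1 * Y$1 * Y$2 + 2 * of_real e2 * Y$3 * Y$4 = 0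
     \<and> 2 * of_real e1 * of_real l1 * Y$1 * Y$2 + of_real e1 * Y$2^2
       + 2 * of_real e2 * of_real l2 * Y$3 * Y$4 + of_real e2 * Y$4^2 = 0"
  by (simp add: qsic_def qform_canonA22 qform_canonB22)

lemma canon_line_subset_qsic: "real_line canon_u canon_v \<subseteq> qsic (canonA22 e1 e2) (canonB22 e1 e2 l1 l2)"
  by (auto simp: mem_real_line_canon mem_canon_qsic)

context
  fixes e1 e2 l1 l2 :: real
  assumes signs: "e1 \<in> {-1, 1}" "e2 \<in> {-1, 1}" and distinct: "l1 \<noteq> l2"
begin

lemma of_real_sign_square: "complex_of_real e1 * of_real e1 = 1" "complex_of_real e2 * of_real e2 = 1"
  using signs by auto

lemma canon_qsic_off_line:
  assumes Y: "Y \<in> qsic (canonA22 e1 e2) (canonB22 e1 e2 l1 l2)" and off: "Y$2 \<noteq> 0 \<or> Y$4 \<noteq> 0"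
  defines "\<rho> \<equiv> 2 * (of_real l2 - of_real l1) * of_real e1 * of_real e2 * Y$2 * Y$4"
  shows "Y$2 \<noteq> 0" and "Y$4 \<noteq> 0"
    and "cmat (canon_cubic e1 e2 l1 l2) *v cubic_param (Y$2) (Y$4) = \<rho> *s Y"
proof -
  note eq = Y[unfolded mem_canon_qsic, THEN conjunct2]
  note eq = eq[THEN conjunct1] eq[THEN conjunct2]
  note sq = of_real_sign_square
  show "Y$2 \<noteq> 0"
  proof
    assume "Y$2 = 0"
    then have "(Y$4)^2 = 0" using eq sq by algebra
    with off \<open>Y$2 = 0\<close> show False by simp
  qed
  show "Y$4 \<noteq> 0"
  proof
    assume "Y$4 = 0"
    then have "(Y$2)^2 = 0" using eq sq by algebra
    with \<open>Y$2 \<noteq> 0\<close> show False by simp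
  qed
  have "of_real e1 * of_real e2 * Y$2^2 * Y$4 + Y$4^3 = \<rho> * Y$1"
    unfolding \<rho>_def using eq sq by algebra
  moreover have "- (Y$2^3) - of_real e1 * of_real e2 * Y$2 * Y$4^2 = \<rho> * Y$3"
    unfolding \<rho>_def using eq sq by algebra
  ultimately show "cmat (canon_cubic e1 e2 l1 l2) *v cubic_param (Y$2) (Y$4) = \<rho> *s Y"
    unfolding vec4_eq_iff canon_cubic_param_nth by (simp add: \<rho>_def power2_eq_square)
qed

lemma canon_qsic_subset:
  "qsic (canonA22 e1 e2) (canonB22 e1 e2 l1 l2)
     \<subseteq> real_line canon_u canon_v \<union> space_cubic (canon_cubic e1 e2 l1 l2)"
proof
  fix Y assume Y: "Y \<in> qsic (canonA22 e1 e2) (canonB22 e1 e2 l1 l2)"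
  show "Y \<in> real_line canon_u canon_v \<union> space_cubic (canon_cubic e1 e2 l1 l2)"
  proof (cases "Y$2 = 0 \<and> Y$4 = 0")
    case True
    with Y show ?thesis by (simp add: mem_real_line_canon qsic_def)
  next
    case False
    define \<rho> where "\<rho> = 2 * (of_real l2 - of_real l1) * of_real e1 * of_real e2 * Y$2 * Y$4"
    have off: "Y$2 \<noteq> 0" "Y$4 \<noteq> 0" "cmat (canon_cubic e1 e2 l1 l2) *v cubic_param (Y$2) (Y$4) = \<rho> *s Y"
      using canon_qsic_off_line[OF Y] False unfolding \<rho>_def by auto
    have "\<rho> \<noteq> 0" using off(1,2) distinct signs by (auto simp: \<rho>_def)
    obtain \<sigma> where \<sigma>: "1 / \<rho> = \<sigma> ^ 3" using exists_complex_root[of 3 "1 / \<rho>"] by auto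
    then have "\<sigma> \<noteq> 0" using \<open>\<rho> \<noteq> 0\<close> by auto
    have "cmat (canon_cubic e1 e2 l1 l2) *v cubic_param (\<sigma> * Y$2) (\<sigma> * Y$4) = (\<sigma>^3 * \<rho>) *s Y"
      by (simp add: cubic_param_scale vector_scalar_commute off(3) vector_smult_assoc)
    also have "\<dots> = Y" using \<sigma> \<open>\<rho> \<noteq> 0\<close> by (simp flip: \<sigma>)
    finally have "Y \<in> space_cubic (canon_cubic e1 e2 l1 l2)"
      unfolding mem_space_cubic using \<open>\<sigma> \<noteq> 0\<close> off(1) by (metis mult_eq_0_iff prod.inject)
    then show ?thesis by blast
  qed
qed

lemma canon_cubic_subset_qsic:
  "space_cubic (canon_cubic e1 e2 l1 l2) \<subseteq> qsic (canonA22 e1 e2) (canonB22 e1 e2 l1 l2)"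
proof
  fix Y assume "Y \<in> space_cubic (canon_cubic e1 e2 l1 l2)"
  then obtain s t where st: "(s, t) \<noteq> (0, 0)" and Y: "Y = cmat (canon_cubic e1 e2 l1 l2) *v cubic_param s t"
    by (auto simp: mem_space_cubic)
  note Y_nth = canon_cubic_param_nth[of e1 e2 l1 l2 s t, folded Y]
  have "of_real e1 * of_real e2 \<noteq> (0::complex)" "of_real l2 - of_real l1 \<noteq> (0::complex)"
    using signs distinct by auto
  then have "Y \<noteq> 0"
    using st unfolding vec4_eq_0_iff Y_nth by auto
  moreover have "2 * of_real e1 * Y$1 * Y$2 + 2 * of_real e2 * Y$3 * Y$4 = 0"
    unfolding Y_nth using of_real_sign_square by algebra
  moreover have "2 * of_real e1 * of_real l1 * Y$1 * Y$2 + of_real e1 * Y$2^2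
      + 2 * of_real e2 * of_real l2 * Y$3 * Y$4 + of_real e2 * Y$4^2 = 0"
    unfolding Y_nth using of_real_sign_square by algebra
  ultimately show "Y \<in> qsic (canonA22 e1 e2) (canonB22 e1 e2 l1 l2)"
    by (simp add: mem_canon_qsic)
qed

lemma canon_qsic:
  "qsic (canonA22 e1 e2) (canonB22 e1 e2 l1 l2)
     = real_line canon_u canon_v \<union> space_cubic (canon_cubic e1 e2 l1 l2)"
  using canon_qsic_subset canon_cubic_subset_qsic canon_line_subset_qsic by blast

lemma canon_line_inter_cubic:
  "real_line canon_u canon_v \<inter> space_cubic (canon_cubic e1 e2 l1 l2) = real_point canon_u \<union> real_point canon_v"
proof (intro equalityI subsetI)
  fix Y assume "Y \<in> real_line canon_u canon_v \<inter> space_cubic (canon_cubic e1 e2 l1 l2)"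
  then obtain s t where st: "(s, t) \<noteq> (0, 0)" and Y: "Y = cmat (canon_cubic e1 e2 l1 l2) *v cubic_param s t"
    and line: "Y$2 = 0" "Y$4 = 0"
    by (auto simp: mem_space_cubic mem_real_line_canon)
  note Y_nth = canon_cubic_param_nth[of e1 e2 l1 l2 s t, folded Y]
  have "s = 0 \<or> t = 0" using line(1) signs distinct unfolding Y_nth by auto
  then show "Y \<in> real_point canon_u \<union> real_point canon_v"
    using st line by (auto simp: mem_real_point_canon_u mem_real_point_canon_v Y_nth)
next
  fix Y assume "Y \<in> real_point canon_u \<union> real_point canon_v"
  then consider "Y$1 \<noteq> 0" "Y$2 = 0" "Y$3 = 0" "Y$4 = 0" | "Y$3 \<noteq> 0" "Y$1 = 0" "Y$2 = 0" "Y$4 = 0"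
    by (auto simp: mem_real_point_canon_u mem_real_point_canon_v)
  then have "\<exists>s t. (s, t) \<noteq> (0, 0) \<and> Y = cmat (canon_cubic e1 e2 l1 l2) *v cubic_param s t"
  proof cases
    case 1
    obtain \<tau> where "Y$1 = \<tau> ^ 3" using exists_complex_root[of 3 "Y$1"] by auto
    with 1 have "Y = cmat (canon_cubic e1 e2 l1 l2) *v cubic_param 0 \<tau>" "\<tau> \<noteq> 0"
      by (auto simp: vec4_eq_iff canon_cubic_param_nth)
    then show ?thesis by blast
  next
    case 2
    obtain \<tau> where \<tau>: "- Y$3 = \<tau> ^ 3" using exists_complex_root[of 3 "- Y$3"] by auto
    then have "Y$3 = - (\<tau> ^ 3)" by (simp flip: \<tau>)
    with 2 have "Y = cmat (canon_cubic e1 e2 l1 l2) *v cubic_param \<tau> 0" "\<tau> \<noteq> 0"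
      by (auto simp: vec4_eq_iff canon_cubic_param_nth)
    then show ?thesis by blast
  qed
  moreover have "Y \<noteq> 0" "Y$2 = 0" "Y$4 = 0" using \<open>Y \<in> real_point canon_u \<union> real_point canon_v\<close>
    by (auto simp: mem_real_point_canon_u mem_real_point_canon_v vec4_eq_0_iff)
  ultimately show "Y \<in> real_line canon_u canon_v \<inter> space_cubic (canon_cubic e1 e2 l1 l2)"
    by (simp add: mem_real_line_canon mem_space_cubic)
qed

lemma invertible_canon_cubic: "invertible (canon_cubic e1 e2 l1 l2)"
proof -
  have "det (canon_cubic e1 e2 l1 l2) = - 4 * (l2 - l1)^2"
    using signs by (auto simp: canon_cubic_def det_4 power2_eq_square algebra_simps)
  then show ?thesis using distinct by (simp add: invertible_det_nz)
qed

end

lemma lin_indep2_canon: "lin_indep2 canon_u canon_v"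
  by (simp add: lin_indep2_def canon_u_def canon_v_def vec4_eq_iff)

section \<open>Index sequence and intersection curve of the given pencil\<close>

lemma block_signs22_signs: "block_signs22 A B l1 l2 e1 e2 \<Longrightarrow> e1 \<in> {-1, 1} \<and> e2 \<in> {-1, 1}"
  by (simp add: block_signs22_def)

lemma det_canonical_pencil:
  assumes "e1 \<in> {-1, 1}" "e2 \<in> {-1, 1}"
  shows "det (l *\<^sub>R canonA22 e1 e2 - canonB22 e1 e2 l1 l2) = (l - l1)^2 * (l - l2)^2"
  using assms by (auto simp: det_4 canonA22_def canonB22_def power2_eq_square algebra_simps)

lemma Id_pencil_eq_2:
  fixes A B :: "real^4^4"
  assumes symA: "transpose A = A" and symB: "transpose B = B"
    and signs: "block_signs22 A B l1 l2 e1 e2" and "l \<noteq> l1" "l \<noteq> l2"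
  shows "Id_pencil A B l = 2"
proof -
  obtain Q where Q: "invertible Q" and QA: "transpose Q ** A ** Q = canonA22 e1 e2"
    and QB: "transpose Q ** B ** Q = canonB22 e1 e2 l1 l2"
    using signs by (auto simp: block_signs22_def)
  have e: "e1 \<in> {-1, 1}" "e2 \<in> {-1, 1}" using block_signs22_signs[OF signs] by auto
  define S where "S = l *\<^sub>R A - B"
  define D where "D = l *\<^sub>R canonA22 e1 e2 - canonB22 e1 e2 l1 l2"
  have "transpose S = l *\<^sub>R transpose A - transpose B" by (simp add: S_def transpose_def vec_eq_iff)
  then have sym: "transpose S = S" by (simp add: S_def symA symB)
  have QS: "transpose Q ** S ** Q = D"
    by (simp add: S_def D_def matrix_diff_ldistrib matrix_diff_rdistrib matrix_scalar_ac QA QB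
        flip: scalar_matrix_assoc)
  have "det Q * det Q * det S = det D"
    unfolding QS[symmetric] by (simp add: det_mul det_transpose)
  moreover have "det D > 0"
    using det_canonical_pencil[OF e] \<open>l \<noteq> l1\<close> \<open>l \<noteq> l2\<close> by (simp add: D_def)
  moreover have "det Q \<noteq> 0" using Q by (simp add: invertible_det_nz)
  ultimately have "det S > 0"
    by (metis not_real_square_gt_zero zero_less_mult_pos)
  \<comment> \<open>On the first block the form is \<open>e\<^sub>1 (2 (l - l\<^sub>1) y\<^sub>1 y\<^sub>2 - y\<^sub>2\<^sup>2)\<close>, which takes both signs.\<close>
  define y_pos :: "real^4" where "y_pos = vector [1 / (l - l1), 1, 0, 0]"
  define y_neg :: "real^4" where "y_neg = vector [0, 1, 0, 0]"
  have "(Q *v y_pos) \<bullet> (S *v (Q *v y_pos)) = e1"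
    using \<open>l \<noteq> l1\<close> unfolding quadratic_form_congruence QS
    by (simp add: y_pos_def D_def inner_vec4 matrix_vector_mult_4_nth canonA22_def canonB22_def field_simps)
  moreover have "(Q *v y_neg) \<bullet> (S *v (Q *v y_neg)) = - e1"
    unfolding quadratic_form_congruence QS
    by (simp add: y_neg_def D_def inner_vec4 matrix_vector_mult_4_nth canonA22_def canonB22_def)
  ultimately have "pos_eig_count S = 2"
    using e(1) pos_eig_count_eq_2[OF sym \<open>det S > 0\<close>, of "Q *v y_neg" "Q *v y_pos"]
      pos_eig_count_eq_2[OF sym \<open>det S > 0\<close>, of "Q *v y_pos" "Q *v y_neg"]
    by auto
  then show ?thesis by (simp add: Id_pencil_def S_def)
qed

lemma lin_indep2_matrix_vector_mult:
  assumes "invertible Q" and "lin_indep2 u v"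
  shows "lin_indep2 (Q *v u) (Q *v v)"
  unfolding lin_indep2_def
proof (intro allI impI)
  fix a b :: real
  assume "a *\<^sub>R (Q *v u) + b *\<^sub>R (Q *v v) = 0"
  then have "Q *v (a *\<^sub>R u + b *\<^sub>R v) = Q *v 0"
    by (simp add: matrix_vector_right_distrib matrix_vector_mult_scaleR)
  then have "a *\<^sub>R u + b *\<^sub>R v = 0"
    by (rule injD[OF inj_matrix_vector_mult[OF assms(1)]])
  then show "a = 0 \<and> b = 0" using assms(2) by (simp add: lin_indep2_def)
qed

lemma block_signs22_qsic_line_cubic:
  assumes signs: "block_signs22 A B l1 l2 e1 e2" and "l1 \<noteq> l2"
  shows "\<exists>u v M p q. lin_indep2 u v \<and> invertible M \<and> lin_indep2 p q
           \<and> qsic A B = real_line u v \<union> space_cubic M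
           \<and> real_line u v \<inter> space_cubic M = real_point p \<union> real_point q"
proof -
  obtain Q where Q: "invertible Q" and QA: "transpose Q ** A ** Q = canonA22 e1 e2"
    and QB: "transpose Q ** B ** Q = canonB22 e1 e2 l1 l2"
    using signs by (auto simp: block_signs22_def)
  have e: "e1 \<in> {-1, 1}" "e2 \<in> {-1, 1}" using block_signs22_signs[OF signs] by auto
  define u where "u = Q *v canon_u"
  define v where "v = Q *v canon_v"
  define M where "M = Q ** canon_cubic e1 e2 l1 l2"
  have "qsic A B = real_line u v \<union> space_cubic M"
    unfolding qsic_congruence[OF Q, of A B] QA QB canon_qsic[OF e \<open>l1 \<noteq> l2\<close>] image_Un
      u_def v_def M_def real_line_transform[OF Q] space_cubic_transform[OF Q] ..
  moreover have "real_line u v \<inter> space_cubic M = real_point u \<union> real_point v"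
    unfolding u_def v_def M_def real_line_transform[OF Q] space_cubic_transform[OF Q]
      real_point_transform[OF Q] image_Un[symmetric] canon_line_inter_cubic[OF e \<open>l1 \<noteq> l2\<close>, symmetric]
    using inj_matrix_vector_mult[OF invertible_cmat[OF Q]] by (rule image_Int[symmetric])
  moreover have "lin_indep2 u v"
    unfolding u_def v_def using Q lin_indep2_canon by (rule lin_indep2_matrix_vector_mult)
  moreover have "invertible M"
    unfolding M_def using Q invertible_canon_cubic[OF e \<open>l1 \<noteq> l2\<close>] by (rule invertible_mult)
  ultimately show ?thesis by blast
qed

lemma seq_equiv_constant_2:
  assumes "e1 \<in> {-1, 1}" "e2 \<in> {-1, 1}"
  shows "seq_equiv (2, e1, 2, e2, 2) (2, -1, 2, -1, 2) \<or> seq_equiv (2, e1, 2, e2, 2) (2, -1, 2, 1, 2)"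
proof -
  have "seq_equiv (2, e1, 2, e2, 2) (2, -e1, 2, -e2, 2)"
    unfolding seq_equiv_def by (rule r_into_equivclp) (simp add: seq_step_def)
  moreover have "seq_equiv x x" for x unfolding seq_equiv_def by (rule equivclp_refl)
  ultimately show ?thesis using assms by (elim insertE) auto
qed

theorem theorem9:
  fixes A B :: "real^4^4" and l1 l2 c :: real
  assumes symA: "sym_mat A" and symB: "sym_mat B"
    and not_zero: "\<exists>l. det (l *\<^sub>R A - B) \<noteq> 0"
    and order: "l1 < l2"
    and double_roots: "c \<noteq> 0" "\<forall>l. det (l *\<^sub>R A - B) = c * (l - l1)^2 * (l - l2)^2"
    and segre: "segre22 A B l1 l2"
  shows "(\<forall>l. l \<noteq> l1 \<and> l \<noteq> l2 \<longrightarrow> Id_pencil A B l = 2)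
       \<and> (\<forall>e1 e2. block_signs22 A B l1 l2 e1 e2 \<longrightarrow>
             seq_equiv (index_seq22 A B l1 l2 e1 e2) (2, -1, 2, -1, 2)
           \<or> seq_equiv (index_seq22 A B l1 l2 e1 e2) (2, -1, 2, 1, 2))
       \<and> (\<exists>u v M p q. lin_indep2 u v \<and> invertible M \<and> lin_indep2 p q
           \<and> qsic A B = real_line u v \<union> space_cubic M
           \<and> real_line u v \<inter> space_cubic M = real_point p \<union> real_point q)"
proof -
  have symA': "transpose A = A" and symB': "transpose B = B"
    using symA symB by (simp_all add: sym_mat_def)
  obtain e1 e2 where signs: "block_signs22 A B l1 l2 e1 e2"
    using segre22_block_signs[OF symA' symB' segre] by blast
  have Id: "\<forall>l. l \<noteq> l1 \<and> l \<noteq> l2 \<longrightarrow> Id_pencil A B l = 2"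
    using Id_pencil_eq_2[OF symA' symB' signs] by blast
  moreover have "seq_equiv (index_seq22 A B l1 l2 f1 f2) (2, -1, 2, -1, 2)
      \<or> seq_equiv (index_seq22 A B l1 l2 f1 f2) (2, -1, 2, 1, 2)"
    if "block_signs22 A B l1 l2 f1 f2" for f1 f2
  proof -
    have "index_seq22 A B l1 l2 f1 f2 = (2, f1, 2, f2, 2)"
      using Id order by (simp add: index_seq22_def)
    then show ?thesis using seq_equiv_constant_2 block_signs22_signs[OF that] by simp
  qed
  moreover have "\<exists>u v M p q. lin_indep2 u v \<and> invertible M \<and> lin_indep2 p q
           \<and> qsic A B = real_line u v \<union> space_cubic M
           \<and> real_line u v \<inter> space_cubic M = real_point p \<union> real_point q"
    using block_signs22_qsic_line_cubic[OF signs] order by simp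
  ultimately show ?thesis by blast
qed

end
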